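(* Fix one of the ground state sequences (A) or (B) and $m\in\mathbb Z$. For every $a\in\mathbb Z_{>0}$, $B_a|m\rangle=0$ in $\mathcal F_m$.
   Context: Setting: $\mathfrak g=\widehat{\mathfrak{sl}}_2$, $U_q(\mathfrak g)$ with coproduct $\Delta(e_i)=e_i\otimes1+t_i^{-1}\otimes e_i$, $\Delta(f_i)=f_i\otimes t_i+1\otimes f_i$, $\Delta(q^h)=q^h\otimes q^h$; $[n]=(q^n-q^{-n})/(q-q^{-1})$; $A\subset\mathbb Q(q)$ the ring of rational functions regular at $q=0$; $J=\{0,1,2\}$. $V_{\mathrm{aff}}$ has basis $z^av_j$ ($a\in\mathbb Z$, $j\in J$) with $\mathrm{wt}(z^av_j)=2(1-j)(\Lambda_1-\Lambda_0)+a\delta$, $e_1z^av_j=[3-j]z^av_{j-1}$, $f_1z^av_j=[j+1]z^av_{j+1}$, $e_0z^av_j=[j+1]z^{a+1}v_{j+1}$, $f_0z^av_j=[3-j]z^{a-1}v_{j-1}$ ($v_{-1}=v_3=0$); $z^b:z^av_j\mapsto z^{a+b}v_j$; $B_{\mathrm{aff}}=\{z^ab_j\}$, $G(z^ab_j)=z^av_j$. $N\subset V_{\mathrm{aff}}^{\otimes2}$ is the smallest subspace containing $v_0\otimes v_0$ stable under $U_q(\mathfrak g)$ and under $z\otimes z$, $z^{-1}\otimes z^{-1}$, $z\otimes1+1\otimes z$; $\bigwedge^nV_{\mathrm{aff}}=V_{\mathrm{aff}}^{\otimes n}/\sum_rV_{\mathrm{aff}}^{\otimes r}\otimes N\otimes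 V_{\mathrm{aff}}^{\otimes(n-r-2)}$ with lattice $L(\bigwedge^nV_{\mathrm{aff}})$ the image of the $A$-span of $G(c_1)\otimes\cdots\otimes G(c_n)$. Ground state sequences: (A) $b^\circ_m=zb_2$ ($m$ even), $b^\circ_m=b_0$ ($m$ odd); (B) $b^\circ_m=b_1$; $v^\circ_m=G(b^\circ_m)$. $\bar{\mathcal F}_m$ is the inductive limit of $\bigwedge^rV_{\mathrm{aff}}$ along $u\mapsto u\wedge v^\circ_{m+r}$, with image of $u$ written $u\wedge\overline{|m+r\rangle}$ and lattice $L(\bar{\mathcal F}_m)$ the $A$-span of images of the $L(\bigwedge^rV_{\mathrm{aff}})$; $\mathcal F_m=\bar{\mathcal F}_m/\bigcap_{n>0}q^nL(\bar{\mathcal F}_m)$ with $q$-adic topology (neighborhood basis $q^nL(\mathcal F_m)$), $|m\rangle$ the image of $\overline{|m\rangle}$. The boson $B_a$ ($a\neq0$) acts on $\mathcal F_m$ as $\sum_{s\ge0}1^{\otimes s}\otimes z^a\otimes1^{\otimes\infty}$, i.e. applying $z^a$ to one wedge factor at a time and summing over all positions (this sum converges $q$-adically); thus $B_a|m\rangle=\sum_{s\ge0}v^\circ_m\wedge\cdots\wedge v^\circ_{m+s-1}\wedge z^av^\circ_{m+s}\wedge|m+s+1\rangle$. *)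

theory Defs
  imports "HOL-Computational_Algebra.Polynomial" "HOL-Computational_Algebra.Fraction_Field"
begin

type_synonym K = "rat poly fract"

definition qq :: K where "qq = Fract [:0, 1:] 1"

definition qint :: "int \<Rightarrow> K" where
  "qint n = (qq powi n - qq powi (-n)) / (qq - inverse qq)"

definition ringA :: "K set" where
  "ringA = {x. \<exists>p r. poly r 0 \<noteq> 0 \<and> x = Fract p r}"

text \<open>The basis element z^a v_j of V_aff is encoded as the pair (a, j), j in J = {0,1,2}.\<close>
type_synonym bv = "int \<times> nat"

definition valid :: "bv \<Rightarrow> bool" where "valid x \<longleftrightarrow> snd x \<le> 2"

definition dlt :: "'b \<Rightarrow> 'b \<Rightarrow> K" where "dlt x = (\<lambda>y. if y = x then 1 else 0)"

inductive_set kspan :: "('b \<Rightarrow> K) set \<Rightarrow> ('b \<Rightarrow> K) set" for S where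
  kspan_zero: "(\<lambda>_. 0) \<in> kspan S"
| kspan_add: "f \<in> kspan S \<Longrightarrow> g \<in> S \<Longrightarrow> (\<lambda>x. f x + c * g x) \<in> kspan S"

inductive_set aspan :: "('b \<Rightarrow> K) set \<Rightarrow> ('b \<Rightarrow> K) set" for S where
  aspan_zero: "(\<lambda>_. 0) \<in> aspan S"
| aspan_add: "f \<in> aspan S \<Longrightarrow> g \<in> S \<Longrightarrow> c \<in> ringA \<Longrightarrow> (\<lambda>x. f x + c * g x) \<in> aspan S"

definition opE1 :: "bv \<Rightarrow> bv \<Rightarrow> K" where
  "opE1 x = (case x of (a, j) \<Rightarrow> (\<lambda>y. if 1 \<le> j \<and> j \<le> 2 \<and> y = (a, j - 1) then qint (3 - int j) else 0))"
definition opF1 :: "bv \<Rightarrow> bv \<Rightarrow> K" where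
  "opF1 x = (case x of (a, j) \<Rightarrow> (\<lambda>y. if j \<le> 1 \<and> y = (a, j + 1) then qint (int j + 1) else 0))"
definition opE0 :: "bv \<Rightarrow> bv \<Rightarrow> K" where
  "opE0 x = (case x of (a, j) \<Rightarrow> (\<lambda>y. if j \<le> 1 \<and> y = (a + 1, j + 1) then qint (int j + 1) else 0))"
definition opF0 :: "bv \<Rightarrow> bv \<Rightarrow> K" where
  "opF0 x = (case x of (a, j) \<Rightarrow> (\<lambda>y. if 1 \<le> j \<and> j \<le> 2 \<and> y = (a - 1, j - 1) then qint (3 - int j) else 0))"

definition opE :: "nat \<Rightarrow> bv \<Rightarrow> bv \<Rightarrow> K" where "opE i = (if i = 0 then opE0 else opE1)"
definition opF :: "nat \<Rightarrow> bv \<Rightarrow> bv \<Rightarrow> K" where "opF i = (if i = 0 then opF0 else opF1)"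

text \<open>Pairing <h, wt(z^a v_j)> for h = n0 h_0 + n1 h_1 + nd d, where
  wt(z^a v_j) = 2(1-j)(Lambda_1 - Lambda_0) + a delta.\<close>
definition hpair :: "int \<Rightarrow> int \<Rightarrow> int \<Rightarrow> bv \<Rightarrow> int" where
  "hpair n0 n1 nd x = (case x of (a, j) \<Rightarrow> (n1 - n0) * (2 * (1 - int j)) + nd * a)"

definition opQ :: "int \<Rightarrow> int \<Rightarrow> int \<Rightarrow> bv \<Rightarrow> bv \<Rightarrow> K" where
  "opQ n0 n1 nd x = (\<lambda>y. if y = x then qq powi hpair n0 n1 nd x else 0)"

definition opT :: "nat \<Rightarrow> bv \<Rightarrow> bv \<Rightarrow> K" where
  "opT i = (if i = 0 then opQ 1 0 0 else opQ 0 1 0)"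
definition opTinv :: "nat \<Rightarrow> bv \<Rightarrow> bv \<Rightarrow> K" where
  "opTinv i = (if i = 0 then opQ (-1) 0 0 else opQ 0 (-1) 0)"

definition opId :: "bv \<Rightarrow> bv \<Rightarrow> K" where "opId = dlt"

definition zsh :: "int \<Rightarrow> bv \<Rightarrow> bv" where "zsh b x = (fst x + b, snd x)"
definition opZ :: "int \<Rightarrow> bv \<Rightarrow> bv \<Rightarrow> K" where "opZ b x = dlt (zsh b x)"

definition app2 :: "(bv \<Rightarrow> bv \<Rightarrow> K) \<Rightarrow> (bv \<Rightarrow> bv \<Rightarrow> K) \<Rightarrow> (bv \<times> bv \<Rightarrow> K) \<Rightarrow> (bv \<times> bv \<Rightarrow> K)" where
  "app2 X Y f = (\<lambda>(y1, y2). \<Sum>p\<in>{p. f p \<noteq> 0}. f p * X (fst p) y1 * Y (snd p) y2)"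

definition vadd :: "('b \<Rightarrow> K) \<Rightarrow> ('b \<Rightarrow> K) \<Rightarrow> ('b \<Rightarrow> K)" where
  "vadd f g = (\<lambda>x. f x + g x)"

text \<open>N: smallest subspace containing v_0 (x) v_0, stable under U_q (acting via the coproduct,
  generators e_i, f_i, q^h) and under z(x)z, z^-1(x)z^-1, z(x)1 + 1(x)z.\<close>
inductive_set Nsp :: "(bv \<times> bv \<Rightarrow> K) set" where
  N_base: "dlt ((0, 0), (0, 0)) \<in> Nsp"
| N_add: "f \<in> Nsp \<Longrightarrow> g \<in> Nsp \<Longrightarrow> vadd f g \<in> Nsp"
| N_smul: "f \<in> Nsp \<Longrightarrow> (\<lambda>x. c * f x) \<in> Nsp"
| N_e: "f \<in> Nsp \<Longrightarrow> i \<le> 1 \<Longrightarrow> vadd (app2 (opE i) opId f) (app2 (opTinv i) (opE i) f) \<in> Nsp"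
| N_f: "f \<in> Nsp \<Longrightarrow> i \<le> 1 \<Longrightarrow> vadd (app2 (opF i) (opT i) f) (app2 opId (opF i) f) \<in> Nsp"
| N_q: "f \<in> Nsp \<Longrightarrow> app2 (opQ n0 n1 nd) (opQ n0 n1 nd) f \<in> Nsp"
| N_zz: "f \<in> Nsp \<Longrightarrow> app2 (opZ 1) (opZ 1) f \<in> Nsp"
| N_zizi: "f \<in> Nsp \<Longrightarrow> app2 (opZ (-1)) (opZ (-1)) f \<in> Nsp"
| N_zsum: "f \<in> Nsp \<Longrightarrow> vadd (app2 (opZ 1) opId f) (app2 opId (opZ 1) f) \<in> Nsp"

text \<open>Vectors of V_aff^(x)R: functions on basis lists of length R.
  ins u n w is (basis tensor u) (x) n (x) (basis tensor w).\<close>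
definition ins :: "bv list \<Rightarrow> (bv \<times> bv \<Rightarrow> K) \<Rightarrow> bv list \<Rightarrow> (bv list \<Rightarrow> K)" where
  "ins u n w = (\<lambda>y. if length y = length u + 2 + length w \<and> take (length u) y = u
       \<and> drop (length u + 2) y = w then n (y ! length u, y ! Suc (length u)) else 0)"

text \<open>Kernel of V^(x)R -> wedge^R: sum over r of V^(x)r (x) N (x) V^(x)(R-r-2)\<close>
definition NR :: "nat \<Rightarrow> (bv list \<Rightarrow> K) set" where
  "NR R = kspan {ins u n w | u n w. n \<in> Nsp \<and> list_all valid u \<and> list_all valid w
                                   \<and> length u + 2 + length w = R}"

text \<open>x in V^(x)R has image in q^n L(wedge^R)\<close>
definition in_qL_wedge :: "nat \<Rightarrow> nat \<Rightarrow> (bv list \<Rightarrow> K) \<Rightarrow> bool" where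
  "in_qL_wedge R n x \<longleftrightarrow> (\<exists>l k. l \<in> aspan {dlt u | u. length u = R \<and> list_all valid u}
       \<and> k \<in> NR R \<and> x = (\<lambda>y. qq ^ n * l y + k y))"

datatype gseq = SeqA | SeqB

definition gs :: "gseq \<Rightarrow> int \<Rightarrow> bv" where
  "gs g m = (case g of SeqA \<Rightarrow> (if even m then (1, 2) else (0, 0)) | SeqB \<Rightarrow> (0, 1))"

text \<open>Transition map wedge^R -> wedge^R' of the inductive system defining Fbar_m:
  u |-> u wedge v^o_{m+R} wedge ... wedge v^o_{m+R'-1} (on representatives in V^(x)R).\<close>
definition ext :: "gseq \<Rightarrow> int \<Rightarrow> nat \<Rightarrow> nat \<Rightarrow> (bv list \<Rightarrow> K) \<Rightarrow> (bv list \<Rightarrow> K)" where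
  "ext g m R R' w = (\<lambda>y. if length y = R' \<and> (\<forall>i\<in>{R..<R'}. y ! i = gs g (m + int i))
                          then w (take R y) else 0)"

text \<open>Elements of Fbar_m are represented by pairs (R, w), w in V^(x)R, standing for
  the image of w in wedge^R followed by the image in the inductive limit.\<close>
type_synonym fbar = "nat \<times> (bv list \<Rightarrow> K)"

definition fbar_add :: "gseq \<Rightarrow> int \<Rightarrow> fbar \<Rightarrow> fbar \<Rightarrow> fbar" where
  "fbar_add g m x y = (max (fst x) (fst y),
      vadd (ext g m (fst x) (max (fst x) (fst y)) (snd x)) (ext g m (fst y) (max (fst x) (fst y)) (snd y)))"

text \<open>Membership in q^n L(Fbar_m) (the A-span of the images of the q^n L(wedge^r)).\<close>
definition in_qL_fbar :: "gseq \<Rightarrow> int \<Rightarrow> nat \<Rightarrow> fbar \<Rightarrow> bool" where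
  "in_qL_fbar g m n x \<longleftrightarrow> (\<exists>R'\<ge>fst x. in_qL_wedge R' n (ext g m (fst x) R' (snd x)))"

text \<open>A sequence in Fbar_m whose image in F_m tends to 0 in the q-adic topology
  (neighbourhood basis q^n L(F_m); its preimage in Fbar_m is q^n L(Fbar_m)).\<close>
definition F_tendsto_zero :: "gseq \<Rightarrow> int \<Rightarrow> (nat \<Rightarrow> fbar) \<Rightarrow> bool" where
  "F_tendsto_zero g m X \<longleftrightarrow> (\<forall>n. \<exists>S0. \<forall>S\<ge>S0. in_qL_fbar g m n (X S))"

text \<open>s-th term: v^o_m wedge ... wedge v^o_{m+s-1} wedge z^a v^o_{m+s} wedge |m+s+1>\<close>
definition Bterm :: "gseq \<Rightarrow> int \<Rightarrow> int \<Rightarrow> nat \<Rightarrow> fbar" where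
  "Bterm g m a s = (Suc s,
     dlt (map (\<lambda>i. if i = s then zsh a (gs g (m + int i)) else gs g (m + int i)) [0..<Suc s]))"

primrec Bpartial :: "gseq \<Rightarrow> int \<Rightarrow> int \<Rightarrow> nat \<Rightarrow> fbar" where
  "Bpartial g m a 0 = (0, (\<lambda>_. 0))"
| "Bpartial g m a (Suc S) = fbar_add g m (Bpartial g m a S) (Bterm g m a S)"

end

theory Submission
  imports Defs
begin

text \<open>
  The single excitation z^a v^o_{m+s} in each term of B_a|m> can be pushed to the right
  through the ground-state tail, gaining a power of q at each step. Call a basis vector
  w above the ground state v^o_p if wt w - wt v^o_p is a nonzero sum of simple roots,
  and measure it by a potential P_p(w) >= 1 built from the root coordinates of that
  difference. The q-wedge relations in N rewrite w (x) v^o_{p+1} as a combination of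
  terms x (x) w' with w' above v^o_{p+1} and coefficients divisible by q^(1 +
  P_{p+1}(w') - P_p(w)). For the minimal w these are a dozen explicit relations
  generated from v_0 (x) v_0; the others follow from these by applying z (x) 1 + 1 (x)
  z, which shifts both potentials by the same amount. By induction on k, every word
  ending in w, v^o_{p+1}, ..., v^o_{p+k} lies in q^(k - P_p(w)) L, and z^a v^o_p has
  potential at most 2a. Hence each term of B_a|m> lies in q^n L for all n.
\<close>

lemma Fract_power: "Fract (p :: rat poly) 1 ^ n = Fract (p ^ n) 1"
  by (induction n) (simp_all add: One_fract_def)

lemma Fract_nonzero: "poly (p :: rat poly) 0 \<noteq> 0 \<Longrightarrow> Fract p 1 \<noteq> 0"
  by (auto simp add: Zero_fract_def eq_fract)

lemma qq_nonzero: "qq \<noteq> 0"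
  by (simp add: qq_def Zero_fract_def eq_fract)

lemma q_polynomials_nonzero: "1 + qq^2 \<noteq> 0" "1 + qq^2 + qq^4 \<noteq> 0" "qq^2 - 1 \<noteq> 0"
  unfolding qq_def One_fract_def by (simp_all add: Fract_power Fract_nonzero)

lemma qint_1: "qint 1 = 1"
  using q_polynomials_nonzero(3) qq_nonzero by (simp add: qint_def field_simps power2_eq_square)

lemma qint_2: "qint 2 = (1 + qq^2) / qq"
  using q_polynomials_nonzero(3) qq_nonzero
  by (simp add: qint_def field_simps power_int_def power2_eq_square)

lemma qint_3: "qint 3 = (1 + qq^2 + qq^4) / qq^2"
  using q_polynomials_nonzero(3) qq_nonzero
  by (simp add: qint_def field_simps power_int_def power2_eq_square) algebra

lemma qint_2_nonzero: "qint 2 \<noteq> 0"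
  using q_polynomials_nonzero(1) qq_nonzero by (simp add: qint_2)

lemma qint_3_nonzero: "qint 3 \<noteq> 0"
  using q_polynomials_nonzero(2) qq_nonzero by (simp add: qint_3)

lemma ringA_Fract: "poly r 0 \<noteq> 0 \<Longrightarrow> Fract p r \<in> ringA"
  unfolding ringA_def by blast

lemma ringA_one [simp]: "1 \<in> ringA"
  by (simp add: One_fract_def ringA_Fract)

lemma ringA_qq [simp]: "qq \<in> ringA"
  by (simp add: qq_def ringA_Fract)

lemma ringA_add [simp]: "x \<in> ringA \<Longrightarrow> y \<in> ringA \<Longrightarrow> x + y \<in> ringA"
  by (auto simp: ringA_def) (metis add_fract mult_eq_0_iff poly_0 poly_mult)

lemma ringA_mult [simp]: "x \<in> ringA \<Longrightarrow> y \<in> ringA \<Longrightarrow> x * y \<in> ringA"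
  by (auto simp: ringA_def) (metis mult_fract mult_eq_0_iff poly_0 poly_mult)

lemma ringA_uminus [simp]: "x \<in> ringA \<Longrightarrow> - x \<in> ringA"
  by (auto simp: ringA_def) (metis minus_fract)

lemma ringA_power [simp]: "x \<in> ringA \<Longrightarrow> x ^ n \<in> ringA"
  by (induction n) simp_all

definition qpowA :: "nat \<Rightarrow> K set" where
  "qpowA n = {qq ^ n * u | u. u \<in> ringA}"

lemma qpowA_antimono:
  assumes "n \<le> k" "c \<in> qpowA k"
  shows "c \<in> qpowA n"
proof -
  obtain u where "u \<in> ringA" "c = qq ^ n * (qq ^ (k - n) * u)"
    using assms by (auto simp: qpowA_def mult.assoc[symmetric] power_add[symmetric])
  then show ?thesis by (auto simp: qpowA_def)
qed

lemma qpowA_power [simp]: "n \<le> k \<Longrightarrow> qq ^ k \<in> qpowA n"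
  by (rule qpowA_antimono[of n k]) (auto simp: qpowA_def intro: exI[of _ 1])

lemma qpowA_qq [simp]: "n \<le> 1 \<Longrightarrow> qq \<in> qpowA n"
  using qpowA_power[of n 1] by simp

lemma qpowA_zero_iff [simp]: "c \<in> qpowA 0 \<longleftrightarrow> c \<in> ringA"
  by (simp add: qpowA_def)

lemma qpowA_uminus [simp]: "- c \<in> qpowA n \<longleftrightarrow> c \<in> qpowA n"
  by (auto simp: qpowA_def) (metis minus_minus mult_minus_right ringA_uminus)+

definition lincomb :: "(K \<times> 'b) list \<Rightarrow> 'b \<Rightarrow> K" where
  "lincomb xs y = (\<Sum>(c, p) \<leftarrow> xs. if p = y then c else 0)"

lemma lincomb_Nil [simp]: "lincomb [] y = 0"
  by (simp add: lincomb_def)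

lemma lincomb_Cons [simp]: "lincomb ((c, p) # xs) y = (if p = y then c else 0) + lincomb xs y"
  by (simp add: lincomb_def)

lemma lincomb_append: "lincomb (xs @ ys) y = lincomb xs y + lincomb ys y"
  by (simp add: lincomb_def)

lemma lincomb_support: "{y. lincomb xs y \<noteq> 0} \<subseteq> snd ` set xs"
  by (induction xs) (auto split: if_splits)

lemma lincomb_eqI:
  assumes "\<forall>k \<in> set (map snd xs) \<union> set (map snd ys). lincomb xs k = lincomb ys k"
  shows "lincomb xs = lincomb ys"
proof
  fix k
  show "lincomb xs k = lincomb ys k"
  proof (cases "k \<in> snd ` set xs \<union> snd ` set ys")
    case False
    then have "lincomb xs k = 0" "lincomb ys k = 0"
      using lincomb_support[of xs] lincomb_support[of ys] by blast+
    then show ?thesis by simp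
  qed (use assms in auto)
qed

lemma dlt_eq_lincomb: "dlt p = lincomb [(1, p)]"
  by (rule ext) (simp add: dlt_def)

lemma vadd_lincomb: "vadd (lincomb xs) (lincomb ys) = lincomb (xs @ ys)"
  by (rule ext) (simp add: vadd_def lincomb_append)

definition scale_list :: "K \<Rightarrow> (K \<times> 'b) list \<Rightarrow> (K \<times> 'b) list" where
  "scale_list c xs = [(c * a, p). (a, p) \<leftarrow> xs]"

lemma lincomb_scale_list: "lincomb (scale_list c xs) = (\<lambda>y. c * lincomb xs y)"
  by (rule ext, induction xs) (auto simp: scale_list_def distrib_left)

lemma app2_eq_sum:
  assumes "finite S" "{p. f p \<noteq> 0} \<subseteq> S"
  shows "app2 X Y f (y1, y2) = (\<Sum>p\<in>S. f p * X (fst p) y1 * Y (snd p) y2)"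
  unfolding app2_def by (simp, rule sum.mono_neutral_left[OF assms]) auto

lemma app2_lincomb_apply:
  "app2 X Y (lincomb xs) (y1, y2) = (\<Sum>(c, p) \<leftarrow> xs. c * X (fst p) y1 * Y (snd p) y2)"
proof (induction xs)
  case Nil
  show ?case by (simp add: app2_def)
next
  case (Cons x xs)
  obtain c q where x: "x = (c, q)" by (cases x)
  let ?S = "insert q (snd ` set xs)" and ?g = "\<lambda>p. X (fst p) y1 * Y (snd p) y2"
  have "app2 X Y (lincomb (x # xs)) (y1, y2) = (\<Sum>p\<in>?S. lincomb (x # xs) p * ?g p)"
    using lincomb_support[of "x # xs"] by (subst app2_eq_sum[of ?S]) (auto simp: x mult.assoc)
  also have "\<dots> = (\<Sum>p\<in>?S. if q = p then c * ?g p else 0) + (\<Sum>p\<in>?S. lincomb xs p * ?g p)"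
    unfolding sum.distrib[symmetric] by (rule sum.cong) (auto simp: x distrib_right)
  also have "\<dots> = c * ?g q + (\<Sum>p\<in>?S. lincomb xs p * ?g p)"
    by simp
  also have "(\<Sum>p\<in>?S. lincomb xs p * ?g p) = app2 X Y (lincomb xs) (y1, y2)"
    using lincomb_support[of xs] by (subst app2_eq_sum[of ?S]) (auto simp: mult.assoc)
  finally show ?case by (simp add: Cons.IH x mult.assoc)
qed

definition app2_list :: "(bv \<Rightarrow> (K \<times> bv) list) \<Rightarrow> (bv \<Rightarrow> (K \<times> bv) list) \<Rightarrow>
    (K \<times> bv \<times> bv) list \<Rightarrow> (K \<times> bv \<times> bv) list" where
  "app2_list Xl Yl xs = [(c * a * b, (x, y)). (c, p) \<leftarrow> xs, (a, x) \<leftarrow> Xl (fst p), (b, y) \<leftarrow> Yl (snd p)]"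

lemma lincomb_tensor:
  "lincomb [(c * a * b, (x, y)). (a, x) \<leftarrow> xs, (b, y) \<leftarrow> ys] (y1, y2)
    = c * lincomb xs y1 * lincomb ys y2"
proof (induction xs)
  case (Cons x xs)
  have "lincomb [(c * a * b, (x, y)). (b, y) \<leftarrow> ys] (y1, y2)
      = c * (if x = y1 then a else 0) * lincomb ys y2" for a x
    by (induction ys) (auto simp: algebra_simps)
  with Cons show ?case by (cases x) (simp add: lincomb_append algebra_simps)
qed simp

lemma app2_lincomb:
  assumes "\<And>x. X x = lincomb (Xl x)" and "\<And>y. Y y = lincomb (Yl y)"
  shows "app2 X Y (lincomb xs) = lincomb (app2_list Xl Yl xs)"
proof (rule ext, clarify)
  fix y1 y2
  show "app2 X Y (lincomb xs) (y1, y2) = lincomb (app2_list Xl Yl xs) (y1, y2)"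
    unfolding app2_lincomb_apply assms
    by (induction xs) (auto simp: app2_list_def lincomb_append lincomb_tensor)
qed

section \<open>Relations in N\<close>

definition e0_list :: "bv \<Rightarrow> (K \<times> bv) list" where
  "e0_list x = (case x of (a, j) \<Rightarrow> if j \<le> 1 then [(qint (int j + 1), (a + 1, j + 1))] else [])"

definition f1_list :: "bv \<Rightarrow> (K \<times> bv) list" where
  "f1_list x = (case x of (a, j) \<Rightarrow> if j \<le> 1 then [(qint (int j + 1), (a, j + 1))] else [])"

text \<open>On V_aff both t_1 and t_0^-1 act on z^a v_j by q^(2(1-j)).\<close>

definition k_list :: "bv \<Rightarrow> (K \<times> bv) list" where
  "k_list x = [(qq powi (2 - 2 * int (snd x)), x)]"

definition id_list :: "bv \<Rightarrow> (K \<times> bv) list" where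
  "id_list x = [(1, x)]"

definition z_list :: "int \<Rightarrow> bv \<Rightarrow> (K \<times> bv) list" where
  "z_list b x = [(1, zsh b x)]"

lemma opE0_lincomb: "opE 0 x = lincomb (e0_list x)"
  by (cases x) (auto simp: opE_def opE0_def e0_list_def)

lemma opF1_lincomb: "opF 1 x = lincomb (f1_list x)"
  by (cases x) (auto simp: opF_def opF1_def f1_list_def)

lemma opT1_lincomb: "opT 1 x = lincomb (k_list x)"
  by (cases x) (auto simp: opT_def opQ_def hpair_def k_list_def algebra_simps)

lemma opTinv0_lincomb: "opTinv 0 x = lincomb (k_list x)"
  by (cases x) (auto simp: opTinv_def opQ_def hpair_def k_list_def algebra_simps)

lemma opId_lincomb: "opId x = lincomb (id_list x)"
  by (simp add: opId_def id_list_def dlt_eq_lincomb)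

lemma opZ_lincomb: "opZ b x = lincomb (z_list b x)"
  by (simp add: opZ_def z_list_def dlt_eq_lincomb)

definition z_coproduct :: "(bv \<times> bv \<Rightarrow> K) \<Rightarrow> (bv \<times> bv \<Rightarrow> K)" where
  "z_coproduct f = vadd (app2 (opZ 1) opId f) (app2 opId (opZ 1) f)"

lemma z_coproduct_lincomb:
  "z_coproduct (lincomb xs) = lincomb (app2_list (z_list 1) id_list xs @ app2_list id_list (z_list 1) xs)"
  by (simp add: z_coproduct_def app2_lincomb opZ_lincomb opId_lincomb vadd_lincomb)

lemma Nsp_lincomb_e0:
  assumes "lincomb xs \<in> Nsp"
  shows "lincomb (app2_list e0_list id_list xs @ app2_list k_list e0_list xs) \<in> Nsp"
  using N_e[OF assms zero_le_one] unfolding vadd_lincomb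
    app2_lincomb[OF opE0_lincomb opId_lincomb] app2_lincomb[OF opTinv0_lincomb opE0_lincomb] .

lemma Nsp_lincomb_f1:
  assumes "lincomb xs \<in> Nsp"
  shows "lincomb (app2_list f1_list k_list xs @ app2_list id_list f1_list xs) \<in> Nsp"
  using N_f[OF assms order_refl] unfolding vadd_lincomb
    app2_lincomb[OF opF1_lincomb opT1_lincomb] app2_lincomb[OF opId_lincomb opF1_lincomb] .

lemma Nsp_lincomb_zz:
  "lincomb xs \<in> Nsp \<Longrightarrow> lincomb (app2_list (z_list 1) (z_list 1) xs) \<in> Nsp"
  using N_zz[of "lincomb xs"] by (simp add: app2_lincomb opZ_lincomb)

lemma Nsp_lincomb_zizi:
  "lincomb xs \<in> Nsp \<Longrightarrow> lincomb (app2_list (z_list (-1)) (z_list (-1)) xs) \<in> Nsp"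
  using N_zizi[of "lincomb xs"] by (simp add: app2_lincomb opZ_lincomb)

lemma Nsp_lincomb_zsum:
  "lincomb xs \<in> Nsp \<Longrightarrow> lincomb (app2_list (z_list 1) id_list xs @ app2_list id_list (z_list 1) xs) \<in> Nsp"
  using N_zsum[of "lincomb xs"] by (simp add: app2_lincomb opZ_lincomb opId_lincomb vadd_lincomb)

lemma Nsp_lincomb_scale: "lincomb xs \<in> Nsp \<Longrightarrow> lincomb (scale_list c xs) \<in> Nsp"
  using N_smul[of "lincomb xs" c] by (simp add: lincomb_scale_list)

lemma Nsp_lincomb_rescale:
  assumes "lincomb xs \<in> Nsp" and "c \<noteq> 0"
    and "\<forall>k \<in> set (map snd xs) \<union> set (map snd (scale_list c ys)). lincomb xs k = lincomb (scale_list c ys) k"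
  shows "lincomb ys \<in> Nsp"
proof -
  have "lincomb ys = lincomb (scale_list (inverse c) xs)"
    using assms(2) lincomb_eqI[OF assms(3)] by (simp add: lincomb_scale_list field_simps)
  then show ?thesis using Nsp_lincomb_scale[OF assms(1)] by simp
qed

lemma Nsp_lincomb_transfer:
  assumes "lincomb xs \<in> Nsp"
    and "\<forall>k \<in> set (map snd xs) \<union> set (map snd ys). lincomb xs k = lincomb ys k"
  shows "lincomb ys \<in> Nsp"
  using assms lincomb_eqI by metis

lemmas op_list_defs = app2_list_def scale_list_def e0_list_def f1_list_def k_list_def id_list_def
  z_list_def zsh_def qint_1 qint_2 qint_3 power_int_minus power_int_numeral

text \<open>N_x_y has leading term x (x) y with coefficient 1, where zv1 stands for z v_1 = (1, 1),
  z2v2 for z^2 v_2 = (2, 2), and so on.\<close>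

lemma N_v0_v0: "lincomb [(1, ((0,0), (0,0)))] \<in> Nsp"
  using N_base by (simp add: dlt_eq_lincomb)

lemma N_zv0_v0: "lincomb [(1, ((1,0), (0,0))), (1, ((0,0), (1,0)))] \<in> Nsp"
  by (rule Nsp_lincomb_transfer[OF Nsp_lincomb_zsum[OF N_v0_v0]]) (simp add: op_list_defs)

lemma N_zv1_v0: "lincomb [(1, ((1,1), (0,0))), (qq^2, ((0,0), (1,1)))] \<in> Nsp"
  by (rule Nsp_lincomb_transfer[OF Nsp_lincomb_e0[OF N_v0_v0]]) (simp add: op_list_defs)

lemma N_z2v2_v0: "lincomb [(1, ((2,2), (0,0))), (qq, ((1,1), (1,1))), (qq^4, ((0,0), (2,2)))] \<in> Nsp"
  by (rule Nsp_lincomb_rescale[OF Nsp_lincomb_e0[OF N_zv1_v0] qint_2_nonzero])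
    (simp add: op_list_defs field_simps qq_nonzero q_polynomials_nonzero)

lemma N_v0_v1: "lincomb [(1, ((0,0), (0,1))), (qq^2, ((0,1), (0,0)))] \<in> Nsp"
  by (rule Nsp_lincomb_transfer[OF Nsp_lincomb_f1[OF N_v0_v0]]) (simp add: op_list_defs)

lemma N_zv1_v1:
  "lincomb [(1, ((1,1), (0,1))), (qq + qq^3, ((0,0), (1,2))), (qq^2, ((0,1), (1,1))),
     (qq + qq^3, ((1,2), (0,0)))] \<in> Nsp"
  by (rule Nsp_lincomb_transfer[OF Nsp_lincomb_f1[OF N_zv1_v0]])
    (simp add: op_list_defs field_simps qq_nonzero, algebra)

lemma N_v0_v2: "lincomb [(1, ((0,0), (0,2))), (qq, ((0,1), (0,1))), (qq^4, ((0,2), (0,0)))] \<in> Nsp"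
  by (rule Nsp_lincomb_rescale[OF Nsp_lincomb_f1[OF N_v0_v1] qint_2_nonzero])
    (simp add: op_list_defs field_simps qq_nonzero q_polynomials_nonzero)

lemma N_v1_v2: "lincomb [(1, ((0,1), (0,2))), (qq^2, ((0,2), (0,1)))] \<in> Nsp"
  by (rule Nsp_lincomb_rescale[OF Nsp_lincomb_f1[OF N_v0_v2] qint_3_nonzero])
    (simp add: op_list_defs field_simps qq_nonzero)

lemma N_z2v2_zv1: "lincomb [(1, ((2,2), (1,1))), (qq^2, ((1,1), (2,2)))] \<in> Nsp"
  by (rule Nsp_lincomb_rescale[OF Nsp_lincomb_e0[OF N_z2v2_v0] qint_3_nonzero])
    (simp add: op_list_defs field_simps qq_nonzero)

lemma N_zv0_zv2: "lincomb [(1, ((1,0), (1,2))), (qq, ((1,1), (1,1))), (qq^4, ((1,2), (1,0)))] \<in> Nsp"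
  by (rule Nsp_lincomb_transfer[OF Nsp_lincomb_zz[OF N_v0_v2]]) (simp add: op_list_defs)

lemma N_zv1_zv2: "lincomb [(1, ((1,1), (1,2))), (qq^2, ((1,2), (1,1)))] \<in> Nsp"
  by (rule Nsp_lincomb_transfer[OF Nsp_lincomb_zz[OF N_v1_v2]]) (simp add: op_list_defs)

lemma N_z2v2_zv2: "lincomb [(1, ((2,2), (1,2))), (1, ((1,2), (2,2)))] \<in> Nsp"
  by (rule Nsp_lincomb_rescale[OF Nsp_lincomb_f1[OF N_z2v2_zv1] qint_2_nonzero])
    (simp add: op_list_defs field_simps qq_nonzero q_polynomials_nonzero)

lemma N_zv2_v1: "lincomb [(1, ((1,2), (0,1))), (qq^2, ((0,1), (1,2)))] \<in> Nsp"
  by (rule Nsp_lincomb_transfer[OF Nsp_lincomb_zizi[OF N_z2v2_zv1]]) (simp add: op_list_defs)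

section \<open>Straightening an excitation past a ground state\<close>

text \<open>wt w - wt gr = alpha0 w gr * alpha_0 + alpha1 w gr * alpha_1.\<close>

definition alpha0 :: "bv \<Rightarrow> bv \<Rightarrow> int" where
  "alpha0 w gr = fst w - fst gr"

definition alpha1 :: "bv \<Rightarrow> bv \<Rightarrow> int" where
  "alpha1 w gr = fst w - fst gr + int (snd gr) - int (snd w)"

definition wt_above :: "bv \<Rightarrow> bv \<Rightarrow> bool" where
  "wt_above w gr \<longleftrightarrow> valid w \<and> 0 \<le> alpha0 w gr \<and> 0 \<le> alpha1 w gr \<and> (alpha0 w gr, alpha1 w gr) \<noteq> (0, 0)"

definition potential :: "gseq \<Rightarrow> bv \<Rightarrow> bv \<Rightarrow> int" where
  "potential g gr w = (case g of
      SeqA \<Rightarrow> if gr = (1, 2) then alpha1 w gr else alpha0 w gr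
    | SeqB \<Rightarrow> alpha0 w gr + alpha1 w gr)"

lemma valid_zsh [simp]: "valid (zsh b w) = valid w"
  by (simp add: valid_def zsh_def)

lemma wt_above_zsh: "wt_above w gr \<Longrightarrow> wt_above (zsh 1 w) gr"
  by (auto simp: wt_above_def alpha0_def alpha1_def zsh_def valid_def)

definition potential_step :: "gseq \<Rightarrow> int" where
  "potential_step g = (case g of SeqA \<Rightarrow> 1 | SeqB \<Rightarrow> 2)"

lemma potential_zsh: "potential g gr (zsh 1 w) = potential g gr w + potential_step g"
  by (cases g) (simp_all add: potential_def potential_step_def alpha0_def alpha1_def zsh_def)

lemma wt_above_induct [consumes 1, case_names minimal zsh]:
  assumes "wt_above w gr"
    and minimal: "\<And>w. wt_above w gr \<Longrightarrow> \<not> wt_above (zsh (-1) w) gr \<Longrightarrow> Q w"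
    and zsh: "\<And>w. wt_above w gr \<Longrightarrow> Q w \<Longrightarrow> Q (zsh 1 w)"
  shows "Q w"
  using assms(1)
proof (induction "nat (fst w - fst gr)" arbitrary: w rule: less_induct)
  case less
  show ?case
  proof (cases "wt_above (zsh (-1) w) gr")
    case True
    then have "nat (fst (zsh (-1) w) - fst gr) < nat (fst w - fst gr)"
      by (auto simp: wt_above_def alpha0_def zsh_def)
    then have "Q (zsh (-1) w)" using less.hyps True by blast
    then show ?thesis using zsh[OF True] by (simp add: zsh_def)
  qed (use less.prems minimal in blast)
qed

text \<open>Elements are kept as finite linear combinations, on which app2 is linear.\<close>

inductive_set excited_span :: "bv \<Rightarrow> (bv \<Rightarrow> int) \<Rightarrow> int \<Rightarrow> (bv \<times> bv \<Rightarrow> K) set"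
  for gr :: bv and P :: "bv \<Rightarrow> int" and E :: int where
  excited_N: "lincomb xs \<in> Nsp \<Longrightarrow> lincomb xs \<in> excited_span gr P E"
| excited_term: "c \<in> qpowA v \<Longrightarrow> 1 + P w \<le> int v + E \<Longrightarrow> valid x \<Longrightarrow> wt_above w gr \<Longrightarrow>
    lincomb [(c, (x, w))] \<in> excited_span gr P E"
| excited_add: "f \<in> excited_span gr P E \<Longrightarrow> h \<in> excited_span gr P E \<Longrightarrow>
    vadd f h \<in> excited_span gr P E"

lemma excited_span_lincomb: "f \<in> excited_span gr P E \<Longrightarrow> \<exists>xs. f = lincomb xs"
  by (induction rule: excited_span.induct) (blast, blast, metis vadd_lincomb)

lemma z_coproduct_term:
  "z_coproduct (lincomb [(c, (x, w))]) = lincomb [(c, (zsh 1 x, w)), (c, (x, zsh 1 w))]"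
  unfolding z_coproduct_lincomb by (rule lincomb_eqI) (simp add: op_list_defs)

lemma excited_span_z_coproduct:
  assumes "f \<in> excited_span gr P E" and P_zsh: "\<And>w. P (zsh 1 w) = P w + d" and "0 \<le> d"
  shows "z_coproduct f \<in> excited_span gr P (E + d)"
  using assms(1)
proof (induction rule: excited_span.induct)
  case (excited_N xs)
  then show ?case
    using Nsp_lincomb_zsum by (simp add: z_coproduct_lincomb excited_span.excited_N)
next
  case (excited_term c v w x)
  have "lincomb [(c, (zsh 1 x, w))] \<in> excited_span gr P (E + d)"
    using excited_term \<open>0 \<le> d\<close> by (intro excited_span.excited_term[of c v]) auto
  moreover have "lincomb [(c, (x, zsh 1 w))] \<in> excited_span gr P (E + d)"
    using excited_term by (intro excited_span.excited_term[of c v]) (auto simp: P_zsh wt_above_zsh)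
  moreover have "z_coproduct (lincomb [(c, (x, w))])
      = vadd (lincomb [(c, (zsh 1 x, w))]) (lincomb [(c, (x, zsh 1 w))])"
    by (simp add: z_coproduct_term vadd_lincomb)
  ultimately show ?case by (metis excited_span.excited_add)
next
  case (excited_add f h)
  obtain xs ys where "f = lincomb xs" "h = lincomb ys"
    using excited_add.hyps excited_span_lincomb by meson
  then have "z_coproduct (vadd f h) = vadd (z_coproduct f) (z_coproduct h)"
    by (simp add: vadd_lincomb z_coproduct_lincomb app2_list_def) (simp add: vadd_lincomb[symmetric] vadd_def algebra_simps)
  then show ?case using excited_add.IH by (simp add: excited_span.excited_add)
qed

lemma Nsp_lincomb_Nil: "lincomb [] \<in> Nsp"
  by (rule Nsp_lincomb_transfer[OF Nsp_lincomb_scale[OF N_v0_v0, of 0]]) (simp add: scale_list_def)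

lemma excited_span_terms:
  assumes "\<forall>(c, x, w) \<in> set ts. c \<in> qpowA (nat (1 + P w - E)) \<and> valid x \<and> wt_above w gr"
  shows "lincomb ts \<in> excited_span gr P E"
  using assms
proof (induction ts)
  case Nil
  show ?case using Nsp_lincomb_Nil by (rule excited_N)
next
  case (Cons t ts)
  obtain c x w where t: "t = (c, x, w)" by (cases t)
  have "lincomb [(c, (x, w))] \<in> excited_span gr P E"
    using Cons.prems t by (intro excited_term[of c "nat (1 + P w - E)"]) auto
  moreover have "lincomb ts \<in> excited_span gr P E"
    using Cons by simp
  moreover have "lincomb (t # ts) = vadd (lincomb [(c, (x, w))]) (lincomb ts)"
    by (simp add: t vadd_lincomb)
  ultimately show ?case by (metis excited_add)
qed

lemma excited_span_of_relation:
  assumes "lincomb ((1, (w, gr)) # ts) \<in> Nsp"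
    and "\<forall>(c, x, w') \<in> set ts. c \<in> qpowA (nat (1 + P w' - E)) \<and> valid x \<and> wt_above w' gr"
  shows "dlt (w, gr) \<in> excited_span gr P E"
proof -
  let ?neg = "[(- c, p). (c, p) \<leftarrow> ts]"
  have "lincomb ?neg \<in> excited_span gr P E"
    using assms(2) by (intro excited_span_terms) auto
  moreover have "dlt (w, gr) = vadd (lincomb ((1, (w, gr)) # ts)) (lincomb ?neg)"
    by (rule ext, induction ts) (auto simp: vadd_def dlt_def)
  ultimately show ?thesis using assms(1) by (metis excited_N excited_add)
qed

lemma excited_span_zsh:
  assumes "dlt (w, gr) \<in> excited_span gr P E"
    and P_zsh: "\<And>w. P (zsh 1 w) = P w + d" and "0 \<le> d"
    and "valid w" and "wt_above (zsh 1 gr) gr" and "1 + P (zsh 1 gr) \<le> E + d"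
  shows "dlt (zsh 1 w, gr) \<in> excited_span gr P (E + d)"
proof -
  have "z_coproduct (dlt (w, gr)) \<in> excited_span gr P (E + d)"
    using excited_span_z_coproduct[OF assms(1) P_zsh \<open>0 \<le> d\<close>] .
  moreover have "lincomb [(- 1, (w, zsh 1 gr))] \<in> excited_span gr P (E + d)"
    using assms by (intro excited_term[of _ 0]) auto
  moreover have "dlt (zsh 1 w, gr) = vadd (z_coproduct (dlt (w, gr))) (lincomb [(- 1, (w, zsh 1 gr))])"
    by (rule ext) (simp add: dlt_eq_lincomb z_coproduct_term vadd_def)
  ultimately show ?thesis by (metis excited_add)
qed

lemma straighten_wt_above:
  assumes "wt_above w gr"
    and minimal: "\<And>w. wt_above w gr \<Longrightarrow> \<not> wt_above (zsh (-1) w) gr \<Longrightarrow>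
        dlt (w, gr') \<in> excited_span gr' P (Q w)"
    and P_zsh: "\<And>w. P (zsh 1 w) = P w + d" and Q_zsh: "\<And>w. Q (zsh 1 w) = Q w + d"
    and Q_pos: "\<And>w. wt_above w gr \<Longrightarrow> 1 \<le> Q w"
    and "0 \<le> d" and "wt_above (zsh 1 gr') gr'" and "P (zsh 1 gr') \<le> d"
  shows "dlt (w, gr') \<in> excited_span gr' P (Q w)"
  using assms(1)
proof (induction rule: wt_above_induct)
  case (minimal w)
  then show ?case by (rule assms(2))
next
  case (zsh w)
  have "dlt (zsh 1 w, gr') \<in> excited_span gr' P (Q w + d)"
    using zsh Q_pos[OF zsh(1)] assms(6-8)
    by (intro excited_span_zsh[where P = P and d = d]) (auto simp: P_zsh wt_above_def)
  then show ?case by (simp add: Q_zsh)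
qed

lemmas wt_above_simps = wt_above_def alpha0_def alpha1_def potential_def valid_def zsh_def

lemma straighten_minimal_B:
  assumes "wt_above w (0, 1)" "\<not> wt_above (zsh (-1) w) (0, 1)"
  shows "dlt (w, (0, 1)) \<in> excited_span (0, 1) (potential SeqB (0, 1)) (potential SeqB (0, 1) w)"
proof -
  have "w = (0, 0) \<or> w = (1, 1) \<or> w = (1, 2)"
    using assms by (cases w) (auto simp: wt_above_simps)
  then show ?thesis
    using excited_span_of_relation[OF N_v0_v1] excited_span_of_relation[OF N_zv1_v1]
      excited_span_of_relation[OF N_zv2_v1]
    by (auto simp: wt_above_simps)
qed

lemma straighten_minimal_A1:
  assumes "wt_above w (1, 2)" "\<not> wt_above (zsh (-1) w) (1, 2)"
  shows "dlt (w, (0, 0)) \<in> excited_span (0, 0) (potential SeqA (0, 0)) (potential SeqA (1, 2) w)"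
proof -
  have "w = (1, 0) \<or> w = (1, 1) \<or> w = (2, 2)"
    using assms by (cases w) (auto simp: wt_above_simps)
  then show ?thesis
    using excited_span_of_relation[OF N_zv0_v0] excited_span_of_relation[OF N_zv1_v0]
      excited_span_of_relation[OF N_z2v2_v0]
    by (auto simp: wt_above_simps)
qed

lemma straighten_minimal_A2:
  assumes "wt_above w (0, 0)" "\<not> wt_above (zsh (-1) w) (0, 0)"
  shows "dlt (w, (1, 2)) \<in> excited_span (1, 2) (potential SeqA (1, 2)) (potential SeqA (0, 0) w)"
proof -
  have "w = (1, 0) \<or> w = (1, 1) \<or> w = (2, 2)"
    using assms by (cases w) (auto simp: wt_above_simps)
  then show ?thesis
    using excited_span_of_relation[OF N_zv0_zv2] excited_span_of_relation[OF N_zv1_zv2]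
      excited_span_of_relation[OF N_z2v2_zv2]
    by (auto simp: wt_above_simps)
qed

lemma gs_cases:
  obtains "g = SeqB" "gs g p = (0, 1)" "gs g (p + 1) = (0, 1)"
  | "g = SeqA" "gs g p = (1, 2)" "gs g (p + 1) = (0, 0)"
  | "g = SeqA" "gs g p = (0, 0)" "gs g (p + 1) = (1, 2)"
  by (cases g; cases "even p") (auto simp: gs_def)

lemma gs_valid: "valid (gs g p)"
  by (cases g) (simp_all add: gs_def valid_def)

lemma potential_pos: "wt_above w (gs g p) \<Longrightarrow> 1 \<le> potential g (gs g p) w"
  by (cases w, cases g p rule: gs_cases) (auto simp: wt_above_simps)

lemma straighten_ground:
  assumes "wt_above w (gs g p)"
  shows "dlt (w, gs g (p + 1)) \<in> excited_span (gs g (p + 1)) (potential g (gs g (p + 1))) (potential g (gs g p) w)"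
proof (rule straighten_wt_above[where P = "potential g (gs g (p + 1))" and Q = "potential g (gs g p)"
      and d = "potential_step g", OF assms _ potential_zsh potential_zsh potential_pos])
  fix w
  assume prems: "wt_above w (gs g p)" "\<not> wt_above (zsh (- 1) w) (gs g p)"
  show "dlt (w, gs g (p + 1)) \<in> excited_span (gs g (p + 1)) (potential g (gs g (p + 1))) (potential g (gs g p) w)"
  proof (cases g p rule: gs_cases)
    case 1
    show ?thesis using prems unfolding 1(2,3) unfolding 1(1) by (rule straighten_minimal_B)
  next
    case 2
    show ?thesis using prems unfolding 2(2,3) unfolding 2(1) by (rule straighten_minimal_A1)
  next
    case 3
    show ?thesis using prems unfolding 3(2,3) unfolding 3(1) by (rule straighten_minimal_A2)
  qed
next
  show "0 \<le> potential_step g"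
    by (cases g) (simp_all add: potential_step_def)
  show "wt_above (zsh 1 (gs g (p + 1))) (gs g (p + 1))"
    by (cases g p rule: gs_cases) (simp_all add: wt_above_simps)
  show "potential g (gs g (p + 1)) (zsh 1 (gs g (p + 1))) \<le> potential_step g"
    by (cases g p rule: gs_cases) (simp_all add: wt_above_simps potential_step_def)
qed

lemma kspan_plus: "h \<in> kspan S \<Longrightarrow> f \<in> kspan S \<Longrightarrow> (\<lambda>x. f x + h x) \<in> kspan S"
proof (induction rule: kspan.induct)
  case (kspan_add h g c)
  then show ?case using kspan.kspan_add[of "\<lambda>x. f x + h x" S g c] by (simp add: add.assoc)
qed simp

lemma kspan_scale: "f \<in> kspan S \<Longrightarrow> (\<lambda>x. c * f x) \<in> kspan S"
proof (induction rule: kspan.induct)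
  case (kspan_add f g d)
  then show ?case using kspan.kspan_add[of "\<lambda>x. c * f x" S g "c * d"] by (simp add: algebra_simps)
qed (simp add: kspan_zero)

lemma kspan_generator: "g \<in> S \<Longrightarrow> g \<in> kspan S"
  using kspan.kspan_add[OF kspan_zero, of g S 1] by simp

lemma aspan_plus: "h \<in> aspan S \<Longrightarrow> f \<in> aspan S \<Longrightarrow> (\<lambda>x. f x + h x) \<in> aspan S"
proof (induction rule: aspan.induct)
  case (aspan_add h g c)
  then show ?case using aspan.aspan_add[of "\<lambda>x. f x + h x" S g c] by (simp add: add.assoc)
qed simp

lemma aspan_scale: "f \<in> aspan S \<Longrightarrow> c \<in> ringA \<Longrightarrow> (\<lambda>x. c * f x) \<in> aspan S"
proof (induction rule: aspan.induct)
  case (aspan_add f g d)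
  then show ?case using aspan.aspan_add[of "\<lambda>x. c * f x" S g "c * d"] by (simp add: algebra_simps)
qed (simp add: aspan_zero)

lemma aspan_generator: "g \<in> S \<Longrightarrow> c \<in> ringA \<Longrightarrow> (\<lambda>x. c * g x) \<in> aspan S"
  using aspan.aspan_add[OF aspan_zero, of g S c] by simp

abbreviation lattice_basis :: "nat \<Rightarrow> (bv list \<Rightarrow> K) set" where
  "lattice_basis R \<equiv> {dlt u |u. length u = R \<and> list_all valid u}"

lemma qL_wedgeI:
  "l \<in> aspan (lattice_basis R) \<Longrightarrow> k \<in> NR R \<Longrightarrow> x = (\<lambda>y. qq ^ n * l y + k y) \<Longrightarrow> in_qL_wedge R n x"
  unfolding in_qL_wedge_def by blast

lemma qL_wedgeE:
  assumes "in_qL_wedge R n x"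
  obtains l k where "l \<in> aspan (lattice_basis R)" "k \<in> NR R" "x = (\<lambda>y. qq ^ n * l y + k y)"
  using assms unfolding in_qL_wedge_def by blast

lemma qL_wedge_NR: "k \<in> NR R \<Longrightarrow> in_qL_wedge R n k"
  by (rule qL_wedgeI[OF aspan_zero]) simp_all

lemma qL_wedge_zero: "in_qL_wedge R n (\<lambda>_. 0)"
  by (rule qL_wedge_NR) (simp add: NR_def kspan_zero)

lemma qL_wedge_add:
  assumes "in_qL_wedge R n x" "in_qL_wedge R n y"
  shows "in_qL_wedge R n (vadd x y)"
proof -
  obtain l k where l: "l \<in> aspan (lattice_basis R)" and k: "k \<in> NR R"
    and x: "x = (\<lambda>y. qq ^ n * l y + k y)"
    using assms(1) by (rule qL_wedgeE)
  obtain l' k' where l': "l' \<in> aspan (lattice_basis R)" and k': "k' \<in> NR R"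
    and y: "y = (\<lambda>y. qq ^ n * l' y + k' y)"
    using assms(2) by (rule qL_wedgeE)
  show ?thesis
    by (rule qL_wedgeI[where l = "\<lambda>z. l z + l' z" and k = "\<lambda>z. k z + k' z"])
      (use l l' k k' in \<open>simp_all add: aspan_plus NR_def kspan_plus x y vadd_def algebra_simps\<close>)
qed

lemma qL_wedge_sum:
  "(\<And>s. s < (S :: nat) \<Longrightarrow> in_qL_wedge R n (F s)) \<Longrightarrow> in_qL_wedge R n (\<lambda>y. \<Sum>s<S. F s y)"
proof (induction S)
  case (Suc S)
  have "(\<lambda>y. \<Sum>s<Suc S. F s y) = vadd (\<lambda>y. \<Sum>s<S. F s y) (F S)"
    by (simp add: vadd_def)
  then show ?case using Suc qL_wedge_add by simp
qed (simp add: qL_wedge_zero)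

lemma qL_wedge_scale:
  assumes "in_qL_wedge R n x" "c \<in> qpowA v"
  shows "in_qL_wedge R (n + v) (\<lambda>y. c * x y)"
proof -
  obtain l k where l: "l \<in> aspan (lattice_basis R)" and k: "k \<in> NR R"
    and x: "x = (\<lambda>y. qq ^ n * l y + k y)"
    using assms(1) by (rule qL_wedgeE)
  obtain u where u: "u \<in> ringA" "c = qq ^ v * u"
    using assms(2) by (auto simp: qpowA_def)
  have ck: "(\<lambda>z. c * k z) \<in> NR R"
    using k by (simp add: NR_def kspan_scale)
  show ?thesis
    by (rule qL_wedgeI[where l = "\<lambda>z. u * l z", OF _ ck])
      (use l u in \<open>simp_all add: aspan_scale x power_add algebra_simps\<close>)
qed

lemma qL_wedge_basis:
  assumes "c \<in> qpowA n" "length u = R" "list_all valid u"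
  shows "in_qL_wedge R n (\<lambda>y. c * dlt u y)"
proof -
  obtain c' where c': "c' \<in> ringA" "c = qq ^ n * c'"
    using assms(1) by (auto simp: qpowA_def)
  have "(\<lambda>z. c' * dlt u z) \<in> aspan (lattice_basis R)"
    by (rule aspan_generator) (use assms c' in auto)
  then show ?thesis
    by (rule qL_wedgeI[where k = "\<lambda>_. 0"]) (simp_all add: c' NR_def kspan_zero mult.assoc)
qed

lemma ins_dlt: "ins u (dlt (a, b)) w = dlt (u @ a # b # w)"
proof (rule ext)
  fix y
  have "y = u @ a # b # w \<longleftrightarrow> length y = length u + 2 + length w \<and> take (length u) y = u \<and>
      drop (length u + 2) y = w \<and> y ! length u = a \<and> y ! Suc (length u) = b"
  proof
    assume h: "length y = length u + 2 + length w \<and> take (length u) y = u \<and>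
      drop (length u + 2) y = w \<and> y ! length u = a \<and> y ! Suc (length u) = b"
    then have "Suc (length u) < length y" by simp
    then have "drop (length u) y = y ! length u # y ! Suc (length u) # drop (Suc (Suc (length u))) y"
      by (simp add: Cons_nth_drop_Suc)
    also have "\<dots> = a # b # w"
      using h by (simp only: add_2_eq_Suc')
    finally show "y = u @ a # b # w" using h by (metis append_take_drop_id)
  qed (simp add: nth_append)
  then show "ins u (dlt (a, b)) w y = dlt (u @ a # b # w) y"
    unfolding ins_def dlt_def by auto
qed

lemma ins_term: "ins u (lincomb [(c, (a, b))]) w = (\<lambda>y. c * dlt (u @ a # b # w) y)"
proof -
  have "lincomb [(c, (a, b))] = (\<lambda>p. c * dlt (a, b) p)"
    by (rule ext) (simp add: dlt_def)
  then show ?thesis by (simp add: ins_dlt[symmetric]) (simp add: ins_def fun_eq_iff)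
qed

lemma ins_NR: "f \<in> Nsp \<Longrightarrow> list_all valid u \<Longrightarrow> list_all valid w \<Longrightarrow> ins u f w \<in> NR (length u + 2 + length w)"
  unfolding NR_def by (rule kspan_generator) blast

lemma ins_vadd: "ins u (vadd f h) w = vadd (ins u f w) (ins u h w)"
  by (rule ext) (simp add: ins_def vadd_def)

lemma excited_span_qL:
  assumes "f \<in> excited_span gr P E"
    and tail: "\<And>u w n. list_all valid u \<Longrightarrow> wt_above w gr \<Longrightarrow> int n + P w \<le> int (length ws) \<Longrightarrow>
        in_qL_wedge (length u + 1 + length ws) n (dlt (u @ w # ws))"
    and "list_all valid ws"
  shows "list_all valid u \<Longrightarrow> int n + E \<le> int (length ws) + 1 \<Longrightarrow>
    in_qL_wedge (length u + 2 + length ws) n (ins u f ws)"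
  using assms(1)
proof (induction arbitrary: u n rule: excited_span.induct)
  case (excited_N xs)
  then show ?case using ins_NR \<open>list_all valid ws\<close> qL_wedge_NR by blast
next
  case (excited_term c v w x)
  show ?case
  proof (cases "n \<le> v")
    case True
    then show ?thesis
      unfolding ins_term using excited_term qpowA_antimono \<open>list_all valid ws\<close>
      by (intro qL_wedge_basis) (auto simp: wt_above_def)
  next
    case False
    have "in_qL_wedge (length (u @ [x]) + 1 + length ws) (n - v) (dlt ((u @ [x]) @ w # ws))"
      using False excited_term by (intro tail) auto
    then have "in_qL_wedge (length u + 2 + length ws) (n - v + v) (\<lambda>y. c * dlt (u @ x # w # ws) y)"
      using qL_wedge_scale[OF _ excited_term.hyps(1)] by simp
    then show ?thesis unfolding ins_term using False by simp
  qed
next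
  case (excited_add f h)
  then show ?case by (simp add: ins_vadd qL_wedge_add)
qed

definition ground_word :: "gseq \<Rightarrow> int \<Rightarrow> nat \<Rightarrow> bv list" where
  "ground_word g p k = map (\<lambda>l. gs g (p + int l)) [0..<k]"

lemma ground_word_Suc: "ground_word g p (Suc k) = gs g p # ground_word g (p + 1) k"
  unfolding ground_word_def by (simp add: upt_conv_Cons map_Suc_upt[symmetric] del: upt_Suc) (simp add: algebra_simps)

lemma length_ground_word [simp]: "length (ground_word g p k) = k"
  by (simp add: ground_word_def)

lemma ground_word_valid: "list_all valid (ground_word g p k)"
  by (simp add: ground_word_def list_all_iff gs_valid)

lemma ground_tail_qL:
  "list_all valid u \<Longrightarrow> wt_above w (gs g p) \<Longrightarrow> int n + potential g (gs g p) w \<le> int k \<Longrightarrow>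
    in_qL_wedge (length u + 1 + k) n (dlt (u @ w # ground_word g (p + 1) k))"
proof (induction k arbitrary: p u w n)
  case 0
  then show ?case using potential_pos[OF "0.prems"(2)] by simp
next
  case (Suc k)
  let ?tl = "ground_word g (p + 2) k"
  have "in_qL_wedge (length u + 2 + length ?tl) n (ins u (dlt (w, gs g (p + 1))) ?tl)"
  proof (rule excited_span_qL[OF straighten_ground[OF Suc.prems(2)]])
    show "in_qL_wedge (length u' + 1 + length ?tl) n' (dlt (u' @ w' # ?tl))"
      if "list_all valid u'" "wt_above w' (gs g (p + 1))"
        "int n' + potential g (gs g (p + 1)) w' \<le> int (length ?tl)" for u' w' n'
      using Suc.IH[where p = "p + 1" and u = u' and w = w' and n = n'] that by (simp add: add.assoc)
  qed (use Suc.prems in \<open>simp_all add: ground_word_valid\<close>)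
  then show ?case
    by (simp add: ins_dlt ground_word_Suc add.assoc)
qed

section \<open>The boson\<close>

lemma ext_trans: "R0 \<le> R1 \<Longrightarrow> R1 \<le> R2 \<Longrightarrow> ext g m R1 R2 (ext g m R0 R1 x) = ext g m R0 R2 x"
proof (rule ext)
  fix y :: "bv list"
  assume "R0 \<le> R1" "R1 \<le> R2"
  moreover have "take R0 (take R1 y) = take R0 y" using \<open>R0 \<le> R1\<close> by (simp add: min_def)
  moreover have "(\<forall>i\<in>{R0..<R2}. y ! i = gs g (m + int i)) \<longleftrightarrow>
      (\<forall>i\<in>{R0..<R1}. y ! i = gs g (m + int i)) \<and> (\<forall>i\<in>{R1..<R2}. y ! i = gs g (m + int i))"
    using calculation by auto
  ultimately show "ext g m R1 R2 (ext g m R0 R1 x) y = ext g m R0 R2 x y"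
    by (auto simp: ext_def)
qed

lemma ext_vadd: "ext g m R R' (vadd f h) = vadd (ext g m R R' f) (ext g m R R' h)"
  by (rule ext) (simp add: ext_def vadd_def)

lemma ext_dlt:
  assumes "length v = R" "R \<le> R'"
  shows "ext g m R R' (dlt v) = dlt (v @ ground_word g (m + int R) (R' - R))"
proof (rule ext)
  fix y
  have "length y = R' \<and> (\<forall>i\<in>{R..<R'}. y ! i = gs g (m + int i)) \<and> take R y = v \<longleftrightarrow>
      y = v @ ground_word g (m + int R) (R' - R)"
  proof
    assume h: "length y = R' \<and> (\<forall>i\<in>{R..<R'}. y ! i = gs g (m + int i)) \<and> take R y = v"
    have "drop R y = ground_word g (m + int R) (R' - R)"
      by (rule nth_equalityI) (use h in \<open>auto simp: ground_word_def algebra_simps\<close>)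
    then show "y = v @ ground_word g (m + int R) (R' - R)"
      using h by (metis append_take_drop_id)
  qed (use assms in \<open>auto simp: nth_append ground_word_def\<close>)
  then show "ext g m R R' (dlt v) y = dlt (v @ ground_word g (m + int R) (R' - R)) y"
    unfolding ext_def dlt_def by (auto simp: assms)
qed

lemma fst_Bpartial: "fst (Bpartial g m a S) = S"
  by (induction S) (simp_all add: fbar_add_def Bterm_def)

lemma ext_Bpartial:
  "S \<le> R \<Longrightarrow> ext g m S R (snd (Bpartial g m a S)) = (\<lambda>y. \<Sum>s<S. ext g m (Suc s) R (snd (Bterm g m a s)) y)"
proof (induction S)
  case 0
  then show ?case by (simp add: ext_def)
next
  case (Suc S)
  have "fst (Bterm g m a S) = Suc S" by (simp add: Bterm_def)
  then have "ext g m (Suc S) R (snd (Bpartial g m a (Suc S))) =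
      vadd (ext g m S R (snd (Bpartial g m a S))) (ext g m (Suc S) R (snd (Bterm g m a S)))"
    using Suc.prems by (simp add: fbar_add_def fst_Bpartial ext_vadd ext_trans)
  then show ?case using Suc by (simp add: vadd_def)
qed

lemma Bterm_eq: "snd (Bterm g m a s) = dlt (ground_word g m s @ [zsh a (gs g (m + int s))])"
proof -
  have "map (\<lambda>i. if i = s then zsh a (gs g (m + int i)) else gs g (m + int i)) [0..<s] = ground_word g m s"
    unfolding ground_word_def by (rule map_cong) auto
  then show ?thesis by (simp add: Bterm_def)
qed

lemma Bterm_qL:
  assumes "0 < a" "n + 2 * nat a + s < R"
  shows "in_qL_wedge R n (ext g m (Suc s) R (snd (Bterm g m a s)))"
proof -
  let ?w = "zsh a (gs g (m + int s))" and ?k = "R - Suc s"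
  have "wt_above ?w (gs g (m + int s))"
    using assms(1) gs_valid[of g "m + int s"] by (auto simp: wt_above_def alpha0_def alpha1_def zsh_def valid_def)
  moreover have "int n + potential g (gs g (m + int s)) ?w \<le> int ?k"
    using assms by (cases g) (auto simp: potential_def alpha0_def alpha1_def zsh_def)
  ultimately have "in_qL_wedge (length (ground_word g m s) + 1 + ?k) n
      (dlt (ground_word g m s @ ?w # ground_word g (m + int s + 1) ?k))"
    by (rule ground_tail_qL[OF ground_word_valid])
  then show ?thesis
    using assms(2) by (simp add: Bterm_eq ext_dlt algebra_simps)
qed

theorem mainTheorem11:
  fixes g :: gseq and m :: int and a :: int
  assumes "a > 0"
  shows "F_tendsto_zero g m (Bpartial g m a)"
  unfolding F_tendsto_zero_def
proof (intro allI exI[of _ 0] impI)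
  fix n S :: nat
  let ?R = "S + n + 2 * nat a"
  have "in_qL_wedge ?R n (\<lambda>y. \<Sum>s<S. ext g m (Suc s) ?R (snd (Bterm g m a s)) y)"
    by (rule qL_wedge_sum) (use Bterm_qL assms in auto)
  then have "in_qL_wedge ?R n (ext g m S ?R (snd (Bpartial g m a S)))"
    by (subst ext_Bpartial) simp_all
  then show "in_qL_fbar g m n (Bpartial g m a S)"
    unfolding in_qL_fbar_def fst_Bpartial by (auto intro!: exI[of _ ?R])
qed

end
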